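(* Let $S$ be an inverse semigroup and $\mathcal M$ a quasi-generating set for $S$. Then $d_{\mathcal M\cup E(S)}=d_{\mathcal M}$, and for all $s,t\in S$, $$d_{\mathcal M}(s,t)=\begin{cases}\min\{k\ge 0\mid \exists\, m_1,\dots,m_k\in\mathcal M \text{ with } s=m_1\cdots m_k t\} & \text{if }(s,t)\in\mathcal L,\\ \infty & \text{if }(s,t)\notin\mathcal L\end{cases}$$ (with $k=0$ meaning $s=t$).
   Context: An inverse semigroup is a semigroup $S$ in which every $s$ has a unique $s^{-1}\in S$ with $ss^{-1}s=s$ and $s^{-1}ss^{-1}=s^{-1}$. $E(S)$ is the set of idempotents. Green's relation $\mathcal L$: $(s,t)\in\mathcal L$ iff $s^{-1}s=t^{-1}t$. A quasi-generating set is a subset $\mathcal G\subseteq S$ with $\mathcal G=\mathcal G^{-1}$ such that $S$ is generated as a semigroup by $\mathcal G\cup E(S)$. For a quasi-generating set $\mathcal G$, the Cayley metric $d_{\mathcal G}$ on $S$ is defined by $d_{\mathcal G}(s,t)=\infty$ if $(s,t)\notin\mathcal L$, and otherwise as the path distance from $s$ to $t$ in the graph whose vertices are the elements of the $\mathcal L$-class of $s$, with $u,v$ joined by an edge of length 1 whenever $gu=v$ for some $g\in\mathcal G$. *)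

theory Defs
  imports Main "HOL-Library.Extended_Nat"
begin

definition inverse_semigroup :: "('a \<Rightarrow> 'a \<Rightarrow> 'a) \<Rightarrow> bool" where
  "inverse_semigroup mult \<longleftrightarrow>
     (\<forall>a b c. mult (mult a b) c = mult a (mult b c)) \<and>
     (\<forall>s. \<exists>!t. mult (mult s t) s = s \<and> mult (mult t s) t = t)"

definition sinv :: "('a \<Rightarrow> 'a \<Rightarrow> 'a) \<Rightarrow> 'a \<Rightarrow> 'a" where
  "sinv mult s = (THE t. mult (mult s t) s = s \<and> mult (mult t s) t = t)"

definition idems :: "('a \<Rightarrow> 'a \<Rightarrow> 'a) \<Rightarrow> 'a set" where
  "idems mult = {e. mult e e = e}"

definition Lrel :: "('a \<Rightarrow> 'a \<Rightarrow> 'a) \<Rightarrow> 'a \<Rightarrow> 'a \<Rightarrow> bool" where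
  "Lrel mult s t \<longleftrightarrow> mult (sinv mult s) s = mult (sinv mult t) t"

inductive_set generated :: "('a \<Rightarrow> 'a \<Rightarrow> 'a) \<Rightarrow> 'a set \<Rightarrow> 'a set"
  for mult :: "'a \<Rightarrow> 'a \<Rightarrow> 'a" and X :: "'a set" where
  gen_base: "x \<in> X \<Longrightarrow> x \<in> generated mult X"
| gen_mult: "a \<in> generated mult X \<Longrightarrow> b \<in> generated mult X \<Longrightarrow> mult a b \<in> generated mult X"

definition quasi_generating :: "('a \<Rightarrow> 'a \<Rightarrow> 'a) \<Rightarrow> 'a set \<Rightarrow> bool" where
  "quasi_generating mult G \<longleftrightarrow>
     sinv mult ` G = G \<and> generated mult (G \<union> idems mult) = UNIV"

definition cayley_adj :: "('a \<Rightarrow> 'a \<Rightarrow> 'a) \<Rightarrow> 'a set \<Rightarrow> 'a \<Rightarrow> 'a \<Rightarrow> 'a \<Rightarrow> bool" where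
  "cayley_adj mult G s u v \<longleftrightarrow> Lrel mult s u \<and> Lrel mult s v \<and>
     (\<exists>g\<in>G. mult g u = v \<or> mult g v = u)"

text \<open>A walk given by its list of vertices; its length is the number of edges.\<close>
definition cayley_walk :: "('a \<Rightarrow> 'a \<Rightarrow> 'a) \<Rightarrow> 'a set \<Rightarrow> 'a \<Rightarrow> 'a list \<Rightarrow> 'a \<Rightarrow> bool" where
  "cayley_walk mult G s xs t \<longleftrightarrow> xs \<noteq> [] \<and> hd xs = s \<and> last xs = t \<and>
     (\<forall>x\<in>set xs. Lrel mult s x) \<and>
     (\<forall>i. Suc i < length xs \<longrightarrow> cayley_adj mult G s (xs ! i) (xs ! Suc i))"

definition cayley_dist :: "('a \<Rightarrow> 'a \<Rightarrow> 'a) \<Rightarrow> 'a set \<Rightarrow> 'a \<Rightarrow> 'a \<Rightarrow> enat" where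
  "cayley_dist mult G s t =
     (if Lrel mult s t
      then Inf {enat (length xs - 1) | xs. cayley_walk mult G s xs t}
      else \<infinity>)"

end

theory Submission
  imports Defs
begin

text \<open>
  Write \<open>d(s) = s\<^sup>-\<^sup>1s\<close> (\<open>sdom s\<close> below), so that \<open>s \<L> t\<close> means \<open>d(s) = d(t)\<close>,
  and left multiplication can only shrink \<open>d\<close>: \<open>d(as) \<le> d(s)\<close> in the natural order of
  idempotents. Hence along a word \<open>s = a\<^sub>1 \<cdots> a\<^sub>k t\<close> with \<open>s \<L> t\<close> all suffixes
  \<open>a\<^sub>i \<cdots> a\<^sub>k t\<close> lie in the \<open>\<L>\<close>-class of \<open>t\<close>, so the word is a walk in the Cayley graph.
  Conversely an edge \<open>gv = u\<close> inside an \<open>\<L>\<close>-class can be reversed as \<open>g\<^sup>-\<^sup>1u = v\<close>, so every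
  walk reads a word in the generators. Finally an idempotent letter \<open>e\<close> with \<open>eu \<L> u\<close>
  satisfies \<open>eu = u\<close> and can be deleted, which is why adding \<open>E(S)\<close> to the generators
  does not shorten any distance.
\<close>

lemma Inf_enat_image:
  assumes "w \<in> W"
  shows "Inf (enat ` W) = enat (Least (\<lambda>k. k \<in> W))"
proof (rule antisym)
  show "Inf (enat ` W) \<le> enat (Least (\<lambda>k. k \<in> W))"
    using LeastI[of "\<lambda>k. k \<in> W", OF assms] by (blast intro: Inf_lower)
  show "enat (Least (\<lambda>k. k \<in> W)) \<le> Inf (enat ` W)"
    by (rule Inf_greatest) (auto intro: Least_le)
qed

lemma cayley_walk_singleton: "cayley_walk mult G s [x] t \<longleftrightarrow> x = s \<and> t = s"
  unfolding cayley_walk_def Lrel_def by auto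

lemma cayley_walk_Cons_Cons:
  "cayley_walk mult G s (x # y # ys) t \<longleftrightarrow>
     x = s \<and> cayley_adj mult G s s y \<and> cayley_walk mult G y (y # ys) t"
proof (cases "x = s \<and> cayley_adj mult G s s y")
  case True
  then have "Lrel mult y s" and "Lrel mult s = Lrel mult y"
    and "cayley_adj mult G s = cayley_adj mult G y"
    unfolding cayley_adj_def Lrel_def by (auto simp: fun_eq_iff)
  then show ?thesis
    using True unfolding cayley_walk_def successively_conv_nth[symmetric] by simp
next
  case False
  then show ?thesis
    unfolding cayley_walk_def successively_conv_nth[symmetric] by auto
qed

context
  fixes mult :: "'a \<Rightarrow> 'a \<Rightarrow> 'a" (infixl "\<cdot>" 70)
  assumes inverse_semigroup: "inverse_semigroup mult"
begin

abbreviation sdom :: "'a \<Rightarrow> 'a" where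
  "sdom s \<equiv> sinv mult s \<cdot> s"

lemma inverse_semigroup_assoc: "a \<cdot> b \<cdot> c = a \<cdot> (b \<cdot> c)"
  using inverse_semigroup unfolding inverse_semigroup_def by blast

lemma sinv_ex1: "\<exists>!t. s \<cdot> t \<cdot> s = s \<and> t \<cdot> s \<cdot> t = t"
  using inverse_semigroup unfolding inverse_semigroup_def by blast

lemma mult_sinv_mult: "s \<cdot> sinv mult s \<cdot> s = s"
  and sinv_mult_sinv: "sinv mult s \<cdot> s \<cdot> sinv mult s = sinv mult s"
  using theI'[OF sinv_ex1[of s]] unfolding sinv_def by auto

lemma sinv_unique: "s \<cdot> t \<cdot> s = s \<Longrightarrow> t \<cdot> s \<cdot> t = t \<Longrightarrow> t = sinv mult s"
  using sinv_ex1[of s] mult_sinv_mult[of s] sinv_mult_sinv[of s] by blast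

lemma sinv_sinv: "sinv mult (sinv mult s) = s"
  using sinv_unique[of "sinv mult s" s] mult_sinv_mult sinv_mult_sinv by simp

lemma sinv_idem: "e \<cdot> e = e \<Longrightarrow> sinv mult e = e"
  by (metis sinv_unique)

lemma sdom_idem: "sdom s \<cdot> sdom s = sdom s"
  by (metis inverse_semigroup_assoc sinv_mult_sinv)

lemma idem_mult_idem:
  assumes e: "e \<cdot> e = e" and f: "f \<cdot> f = f"
  shows "e \<cdot> f \<cdot> (e \<cdot> f) = e \<cdot> f"
proof -
  define x where "x = sinv mult (e \<cdot> f)"
  have x1: "e \<cdot> f \<cdot> x \<cdot> (e \<cdot> f) = e \<cdot> f" and x2: "x \<cdot> (e \<cdot> f) \<cdot> x = x"
    unfolding x_def using mult_sinv_mult sinv_mult_sinv by auto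
  have "e \<cdot> f \<cdot> (f \<cdot> x \<cdot> e) \<cdot> (e \<cdot> f) = e \<cdot> f"
    using x1 e f by (metis inverse_semigroup_assoc)
  moreover have "f \<cdot> x \<cdot> e \<cdot> (e \<cdot> f) \<cdot> (f \<cdot> x \<cdot> e) = f \<cdot> (x \<cdot> (e \<cdot> f) \<cdot> x) \<cdot> e"
    using e f by (metis inverse_semigroup_assoc)
  \<comment> \<open>\<open>f x e\<close> is another inverse of \<open>e f\<close>, so \<open>x = f x e\<close>, which makes \<open>x\<close> idempotent\<close>
  ultimately have fxe: "f \<cdot> x \<cdot> e = x"
    using sinv_unique x2 unfolding x_def by metis
  have "x \<cdot> x = f \<cdot> (x \<cdot> (e \<cdot> f) \<cdot> x) \<cdot> e"
    using fxe by (metis inverse_semigroup_assoc)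
  then have "x \<cdot> x = x"
    using x2 fxe by simp
  moreover have "e \<cdot> f = sinv mult x"
    unfolding x_def by (simp add: sinv_sinv)
  ultimately show ?thesis
    using sinv_idem by simp
qed

lemma idems_commute:
  assumes e: "e \<cdot> e = e" and f: "f \<cdot> f = f"
  shows "e \<cdot> f = f \<cdot> e"
proof -
  have ef: "e \<cdot> f \<cdot> (e \<cdot> f) = e \<cdot> f" and fe: "f \<cdot> e \<cdot> (f \<cdot> e) = f \<cdot> e"
    using idem_mult_idem e f by auto
  have "e \<cdot> f \<cdot> (f \<cdot> e) \<cdot> (e \<cdot> f) = e \<cdot> f" and "f \<cdot> e \<cdot> (e \<cdot> f) \<cdot> (f \<cdot> e) = f \<cdot> e"
    using ef fe e f by (metis inverse_semigroup_assoc)+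
  then have "f \<cdot> e = sinv mult (e \<cdot> f)"
    by (rule sinv_unique)
  then show ?thesis
    using sinv_idem[OF ef] by simp
qed

lemma sinv_mult: "sinv mult (a \<cdot> b) = sinv mult b \<cdot> sinv mult a"
proof -
  let ?a' = "sinv mult a" and ?b' = "sinv mult b"
  have comm: "b \<cdot> ?b' \<cdot> (?a' \<cdot> a) = ?a' \<cdot> a \<cdot> (b \<cdot> ?b')"
    using idems_commute[OF sdom_idem[of "?b'"] sdom_idem[of a]] by (simp add: sinv_sinv)
  have "a \<cdot> b \<cdot> (?b' \<cdot> ?a') \<cdot> (a \<cdot> b) = a \<cdot> (b \<cdot> ?b' \<cdot> (?a' \<cdot> a)) \<cdot> b"
    by (simp add: inverse_semigroup_assoc)
  also have "\<dots> = (a \<cdot> ?a' \<cdot> a) \<cdot> (b \<cdot> ?b' \<cdot> b)"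
    using comm by (simp add: inverse_semigroup_assoc)
  finally have 1: "a \<cdot> b \<cdot> (?b' \<cdot> ?a') \<cdot> (a \<cdot> b) = a \<cdot> b"
    by (simp add: mult_sinv_mult)
  have "?b' \<cdot> ?a' \<cdot> (a \<cdot> b) \<cdot> (?b' \<cdot> ?a') = ?b' \<cdot> (?a' \<cdot> a \<cdot> (b \<cdot> ?b')) \<cdot> ?a'"
    by (simp add: inverse_semigroup_assoc)
  also have "\<dots> = (?b' \<cdot> b \<cdot> ?b') \<cdot> (?a' \<cdot> a \<cdot> ?a')"
    using comm[symmetric] by (simp add: inverse_semigroup_assoc)
  finally have 2: "?b' \<cdot> ?a' \<cdot> (a \<cdot> b) \<cdot> (?b' \<cdot> ?a') = ?b' \<cdot> ?a'"
    by (simp add: sinv_mult_sinv)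
  from 1 2 show ?thesis
    by (rule sinv_unique[symmetric])
qed

text \<open>The \<open>\<L>\<close>-preorder: \<open>S\<^sup>1s \<subseteq> S\<^sup>1t\<close> holds iff \<open>d(s) \<le> d(t)\<close>.\<close>

abbreviation L_below :: "'a \<Rightarrow> 'a \<Rightarrow> bool" where
  "L_below s t \<equiv> sdom s = sdom s \<cdot> sdom t"

lemma L_below_mult_left: "L_below (a \<cdot> x) x"
proof -
  have "sdom (a \<cdot> x) \<cdot> sdom x = sinv mult (a \<cdot> x) \<cdot> a \<cdot> (x \<cdot> sinv mult x \<cdot> x)"
    by (simp add: inverse_semigroup_assoc)
  then show ?thesis
    using mult_sinv_mult by (simp add: inverse_semigroup_assoc)
qed

lemma L_below_trans: "L_below s x \<Longrightarrow> L_below x t \<Longrightarrow> L_below s t"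
  by (metis inverse_semigroup_assoc)

lemma L_below_foldr: "L_below (foldr mult ws t) t"
  by (induction ws) (auto simp: sdom_idem intro: L_below_trans L_below_mult_left)

lemma sdom_eq_if_L_below_between:
  assumes "L_below s x" and "L_below x t" and "sdom s = sdom t"
  shows "sdom x = sdom t"
  using assms idems_commute[OF sdom_idem sdom_idem] by metis

lemma idem_mult_eq_if_sdom_eq:
  assumes e: "e \<cdot> e = e" and sdom_eq: "sdom (e \<cdot> u) = sdom u"
  shows "e \<cdot> u = u"
proof -
  let ?u' = "sinv mult u"
  have "sdom (e \<cdot> u) = ?u' \<cdot> (e \<cdot> (e \<cdot> u))"
    using sinv_mult sinv_idem[OF e] by (simp add: inverse_semigroup_assoc)
  also have "\<dots> = ?u' \<cdot> e \<cdot> u"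
    using e by (simp add: inverse_semigroup_assoc flip: inverse_semigroup_assoc[of e e])
  finally have "u = (u \<cdot> ?u') \<cdot> e \<cdot> u"
    using sdom_eq mult_sinv_mult[of u] by (metis inverse_semigroup_assoc)
  also have "\<dots> = e \<cdot> (u \<cdot> ?u' \<cdot> u)"
    using idems_commute[OF sdom_idem[of ?u'] e] by (simp add: sinv_sinv inverse_semigroup_assoc)
  finally show ?thesis
    using mult_sinv_mult by simp
qed

lemma sinv_edge:
  assumes u: "g \<cdot> v = u" and sdom_eq: "sdom u = sdom v"
  shows "sinv mult g \<cdot> u = v"
proof -
  define x where "x = sinv mult g \<cdot> u"
  have x: "x = sdom g \<cdot> v"
    using u unfolding x_def by (simp add: inverse_semigroup_assoc)
  have "u = g \<cdot> x"
    using u mult_sinv_mult unfolding x_def by (metis inverse_semigroup_assoc)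
  then have "sdom x = sdom v"
    using sdom_eq_if_L_below_between[of u x v] L_below_mult_left x sdom_eq by metis
  then show ?thesis
    using idem_mult_eq_if_sdom_eq[OF sdom_idem] x unfolding x_def by metis
qed

lemma Lrel_foldr_suffix:
  assumes "Lrel mult (foldr mult (a # ws) t) t"
  shows "Lrel mult (foldr mult ws t) t"
  using assms sdom_eq_if_L_below_between L_below_mult_left L_below_foldr
  unfolding Lrel_def by (metis foldr_Cons o_apply)

lemma generated_foldr:
  "x \<in> generated mult X \<Longrightarrow> \<exists>ws. set ws \<subseteq> X \<and> x \<cdot> t = foldr mult ws t"
proof (induction x arbitrary: t rule: generated.induct)
  case (gen_base x)
  then show ?case
    by (intro exI[of _ "[x]"]) simp
next
  case (gen_mult a b t)
  obtain wb where "set wb \<subseteq> X" "b \<cdot> t = foldr mult wb t"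
    using gen_mult.IH(2) by blast
  moreover obtain wa where "set wa \<subseteq> X" "a \<cdot> (b \<cdot> t) = foldr mult wa (b \<cdot> t)"
    using gen_mult.IH(1) by blast
  ultimately show ?case
    by (intro exI[of _ "wa @ wb"]) (simp add: inverse_semigroup_assoc)
qed

lemma word_drop_idems:
  assumes "set ws \<subseteq> M \<union> idems mult" and "s = foldr mult ws t" and "Lrel mult s t"
  shows "\<exists>ms. set ms \<subseteq> M \<and> length ms \<le> length ws \<and> s = foldr mult ms t"
  using assms
proof (induction ws arbitrary: s)
  case Nil
  then show ?case
    by (intro exI[of _ "[]"]) simp
next
  case (Cons a ws)
  define x where "x = foldr mult ws t"
  have s: "s = a \<cdot> x"
    using Cons.prems(2) unfolding x_def by simp
  have x_Lrel: "Lrel mult x t"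
    using Lrel_foldr_suffix Cons.prems(2,3) unfolding x_def by blast
  then obtain ms where ms: "set ms \<subseteq> M" "length ms \<le> length ws" "x = foldr mult ms t"
    using Cons.IH[OF _ x_def] Cons.prems(1) by auto
  show ?case
  proof (cases "a \<in> M")
    case True
    then show ?thesis
      using ms s by (intro exI[of _ "a # ms"]) auto
  next
    case False
    then have "a \<cdot> a = a"
      using Cons.prems(1) by (auto simp: idems_def)
    then have "s = x"
      using idem_mult_eq_if_sdom_eq s x_Lrel Cons.prems(3) unfolding Lrel_def by metis
    then show ?thesis
      using ms by (intro exI[of _ ms]) auto
  qed
qed

lemma generator_word_of_Lrel:
  assumes "quasi_generating mult M" and "Lrel mult s t"
  shows "\<exists>ms. set ms \<subseteq> M \<and> s = foldr mult ms t"
proof -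
  have "s = s \<cdot> sdom s"
    using mult_sinv_mult by (simp add: inverse_semigroup_assoc)
  then have s: "s = s \<cdot> sinv mult t \<cdot> t"
    using assms(2) unfolding Lrel_def by (simp add: inverse_semigroup_assoc)
  have "s \<cdot> sinv mult t \<in> generated mult (M \<union> idems mult)"
    using assms(1) unfolding quasi_generating_def by simp
  then obtain ws where ws: "set ws \<subseteq> M \<union> idems mult" "s \<cdot> sinv mult t \<cdot> t = foldr mult ws t"
    using generated_foldr by blast
  show ?thesis
    using word_drop_idems[OF ws(1) _ assms(2)] ws(2) s by auto
qed

lemma Least_word_Un_idems:
  assumes "Lrel mult s t" and "set ms \<subseteq> M" and "s = foldr mult ms t"
  shows "(LEAST k. \<exists>ws. length ws = k \<and> set ws \<subseteq> M \<union> idems mult \<and> s = foldr mult ws t) =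
         (LEAST k. \<exists>ms. length ms = k \<and> set ms \<subseteq> M \<and> s = foldr mult ms t)"
    (is "Least ?P_ME = Least ?P_M")
proof (rule antisym)
  have "?P_M (length ms)"
    using assms(2,3) by blast
  then have "?P_M (Least ?P_M)"
    by (rule LeastI)
  then have "?P_ME (Least ?P_M)"
    by blast
  then show "Least ?P_ME \<le> Least ?P_M"
    by (rule Least_le)
next
  have "?P_ME (length ms)"
    using assms(2,3) by blast
  then have "?P_ME (Least ?P_ME)"
    by (rule LeastI)
  then obtain ws where ws: "length ws = Least ?P_ME" "set ws \<subseteq> M \<union> idems mult" "s = foldr mult ws t"
    by blast
  then obtain vs where "length vs \<le> Least ?P_ME" "set vs \<subseteq> M" "s = foldr mult vs t"
    using word_drop_idems[OF ws(2,3) assms(1)] by auto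
  moreover from this have "Least ?P_M \<le> length vs"
    by (blast intro: Least_le)
  ultimately show "Least ?P_M \<le> Least ?P_ME"
    by linarith
qed

lemma cayley_walk_of_word:
  assumes "set ws \<subseteq> G" and "Lrel mult (foldr mult ws t) t"
  shows "\<exists>xs. cayley_walk mult G (foldr mult ws t) xs t \<and> length xs = Suc (length ws)"
  using assms
proof (induction ws)
  case Nil
  have "cayley_walk mult G t [t] t"
    by (simp add: cayley_walk_singleton)
  then show ?case
    by auto
next
  case (Cons a ws)
  define x where "x = foldr mult ws t"
  define s where "s = a \<cdot> x"
  have "Lrel mult x t" and "Lrel mult s t"
    using Lrel_foldr_suffix Cons.prems(2) unfolding x_def s_def by auto
  obtain xs where "cayley_walk mult G x xs t" and len: "length xs = Suc (length ws)"
    using Cons.IH Cons.prems(1) \<open>Lrel mult x t\<close> unfolding x_def by auto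
  moreover from this obtain ys where "xs = x # ys"
    by (cases xs) (auto simp: cayley_walk_def)
  ultimately have walk: "cayley_walk mult G x (x # ys) t" and len: "length ys = length ws"
    by auto
  have "cayley_adj mult G s s x"
    using \<open>Lrel mult x t\<close> \<open>Lrel mult s t\<close> Cons.prems(1)
    unfolding cayley_adj_def Lrel_def s_def by auto
  then have "cayley_walk mult G s (s # x # ys) t"
    using walk by (simp add: cayley_walk_Cons_Cons)
  moreover have "foldr mult (a # ws) t = s"
    unfolding s_def x_def by simp
  ultimately show ?case
    using len by (intro exI[of _ "s # x # ys"]) simp
qed

lemma word_of_cayley_walk:
  assumes "sinv mult ` G \<subseteq> G" and "cayley_walk mult G s xs t"
  shows "\<exists>ws. set ws \<subseteq> G \<and> length ws = length xs - 1 \<and> s = foldr mult ws t"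
  using assms(2)
proof (induction xs arbitrary: s rule: induct_list012)
  case 1
  then show ?case
    by (simp add: cayley_walk_def)
next
  case (2 x)
  then show ?case
    by (intro exI[of _ "[]"]) (simp add: cayley_walk_singleton)
next
  case (3 x y ys)
  then have adj: "cayley_adj mult G s s y" and walk: "cayley_walk mult G y (y # ys) t"
    by (simp_all add: cayley_walk_Cons_Cons)
  obtain ws where ws: "set ws \<subseteq> G" "length ws = length ys" "y = foldr mult ws t"
    using "3.IH"(2)[OF walk] by auto
  obtain g where "g \<in> G" and "g \<cdot> s = y \<or> g \<cdot> y = s" and "Lrel mult s y"
    using adj unfolding cayley_adj_def by blast
  then obtain h where "h \<in> G" and "h \<cdot> y = s"
  proof (elim disjE)
    assume "g \<cdot> s = y"
    then have "sinv mult g \<cdot> y = s"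
      using sinv_edge[of g s y] \<open>Lrel mult s y\<close> unfolding Lrel_def by simp
    moreover have "sinv mult g \<in> G"
      using \<open>g \<in> G\<close> assms(1) by blast
    ultimately show thesis
      by (rule that[rotated])
  qed (use that in blast)
  then show ?case
    using ws by (intro exI[of _ "h # ws"]) simp
qed

lemma cayley_dist_eq_Least_word:
  assumes "sinv mult ` G \<subseteq> G" and "Lrel mult s t" and "set ws \<subseteq> G" and "s = foldr mult ws t"
  shows "cayley_dist mult G s t =
           enat (LEAST k. \<exists>ws. length ws = k \<and> set ws \<subseteq> G \<and> s = foldr mult ws t)"
proof -
  let ?W = "{k. \<exists>ws. length ws = k \<and> set ws \<subseteq> G \<and> s = foldr mult ws t}"
  have "{enat (length xs - 1) | xs. cayley_walk mult G s xs t} = enat ` ?W"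
  proof (intro equalityI subsetI)
    fix n assume "n \<in> {enat (length xs - 1) | xs. cayley_walk mult G s xs t}"
    then obtain xs where "n = enat (length xs - 1)" and "cayley_walk mult G s xs t"
      by blast
    then show "n \<in> enat ` ?W"
      using word_of_cayley_walk[OF assms(1)] by blast
  next
    fix n assume "n \<in> enat ` ?W"
    then obtain vs where "n = enat (length vs)" "set vs \<subseteq> G" "s = foldr mult vs t"
      by blast
    moreover from this obtain xs where "cayley_walk mult G s xs t" "length xs = Suc (length vs)"
      using cayley_walk_of_word assms(2) by blast
    ultimately have "n = enat (length xs - 1)" and "cayley_walk mult G s xs t"
      by simp_all
    then show "n \<in> {enat (length xs - 1) | xs. cayley_walk mult G s xs t}"
      by blast
  qed
  also have "Inf (enat ` ?W) = enat (LEAST k. k \<in> ?W)"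
    using assms(3,4) by (intro Inf_enat_image) blast
  finally show ?thesis
    using assms(2) unfolding cayley_dist_def by simp
qed

lemma sinv_closed_Un_idems:
  "sinv mult ` M \<subseteq> M \<Longrightarrow> sinv mult ` (M \<union> idems mult) \<subseteq> M \<union> idems mult"
  using sinv_idem by (auto simp: idems_def)

lemma cayley_dist_Lrel:
  assumes "quasi_generating mult M" and "Lrel mult s t"
  shows cayley_dist_eq_Least_generators: "cayley_dist mult M s t =
      enat (LEAST k. \<exists>ms. length ms = k \<and> set ms \<subseteq> M \<and> s = foldr mult ms t)"
    and cayley_dist_Un_idems_Lrel: "cayley_dist mult (M \<union> idems mult) s t = cayley_dist mult M s t"
proof -
  have closed: "sinv mult ` M \<subseteq> M"
    using assms(1) by (simp add: quasi_generating_def)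
  obtain ms where ms: "set ms \<subseteq> M" "s = foldr mult ms t"
    using generator_word_of_Lrel[OF assms] by blast
  then show dist_M: "cayley_dist mult M s t =
      enat (LEAST k. \<exists>ms. length ms = k \<and> set ms \<subseteq> M \<and> s = foldr mult ms t)"
    using cayley_dist_eq_Least_word[OF closed assms(2)] by blast
  have "set ms \<subseteq> M \<union> idems mult"
    using ms(1) by blast
  then have "cayley_dist mult (M \<union> idems mult) s t = enat (LEAST k.
      \<exists>ws. length ws = k \<and> set ws \<subseteq> M \<union> idems mult \<and> s = foldr mult ws t)"
    by (rule cayley_dist_eq_Least_word[OF sinv_closed_Un_idems[OF closed] assms(2) _ ms(2)])
  then show "cayley_dist mult (M \<union> idems mult) s t = cayley_dist mult M s t"
    using Least_word_Un_idems[OF assms(2) ms] dist_M by simp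
qed

end

theorem lemma1p15:
  fixes mult :: "'a \<Rightarrow> 'a \<Rightarrow> 'a" and M :: "'a set"
  assumes "inverse_semigroup mult"
    and "quasi_generating mult M"
  shows "cayley_dist mult (M \<union> idems mult) = cayley_dist mult M \<and>
         (\<forall>s t. Lrel mult s t \<longrightarrow>
           (\<exists>k ms. length ms = k \<and> set ms \<subseteq> M \<and> s = foldr mult ms t) \<and>
           cayley_dist mult M s t =
             enat (LEAST k. \<exists>ms. length ms = k \<and> set ms \<subseteq> M \<and> s = foldr mult ms t)) \<and>
         (\<forall>s t. \<not> Lrel mult s t \<longrightarrow> cayley_dist mult M s t = \<infinity>)"
proof -
  have "cayley_dist mult (M \<union> idems mult) = cayley_dist mult M"
  proof (intro ext)
    show "cayley_dist mult (M \<union> idems mult) s t = cayley_dist mult M s t" for s t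
      using cayley_dist_Un_idems_Lrel[OF assms] by (cases "Lrel mult s t") (simp_all add: cayley_dist_def)
  qed
  then show ?thesis
    using generator_word_of_Lrel[OF assms] cayley_dist_eq_Least_generators[OF assms]
    by (auto simp: cayley_dist_def)
qed

end
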